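(* Let $\sigma$ be an $(\alpha,\beta)$-ReLU activation and let $\lambda=\max\{|\mu|:\mu\text{ an eigenvalue of }\hat A,\ \mu\neq1\}$ (with $\lambda=0$ if $1$ is the only eigenvalue). If $\lambda^2\sigma_w^2(\alpha^2+\beta^2)<2$, then $\mathbb E_{h\sim N(\mathbf 0_n,\Sigma^{(l)})}[\mathrm{Dir}(h)]=O\!\left(\left(\tfrac{\lambda^2\sigma_w^2(\alpha^2+\beta^2)}{2}\right)^l\right)$ as $l\to\infty$.
   Context: An activation $\sigma:\mathbb R\to\mathbb R$ is $(\alpha,\beta)$-ReLU if $\sigma(x)=\alpha x$ for $x\ge0$ and $\sigma(x)=\beta x$ for $x<0$, where $\alpha,\beta\ge0$ are not both $0$. Let $\mathcal G=(\mathcal V,\mathcal E)$ be a finite undirected graph with $n$ nodes, adjacency matrix $A$, degree matrix $D=\mathrm{diag}(A\mathbf 1_n)$ with degrees $d_i$, $\tilde A=A+I$, $\tilde D=D+I$, $\hat A=\tilde D^{-1/2}\tilde A\tilde D^{-1/2}$, $\hat L=I-\hat A$. For $x\in\mathbb R^n$, $\mathrm{Dir}(x)=x^\top\hat Lx=\sum_{\{i,j\}\in\mathcal E}(x_i/\sqrt{1+d_i}-x_j/\sqrt{1+d_j})^2$. Let $X\in\mathbb R^{n\times d_0}$ and $\sigma_w^2>0$. For positive semidefinite $\Sigma$, $G(\Sigma)=\mathbb E_{h\sim N(\mathbf 0_n,\Sigma)}[\sigma(h)\sigma(h)^\top]$; $\Sigma^{(1)}=\frac{\sigma_w^2}{d_0}\hat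 AXX^\top\hat A$, $\Sigma^{(l+1)}=\sigma_w^2\hat AG(\Sigma^{(l)})\hat A$. *)

theory Defs
  imports "HOL-Probability.Probability" "HOL-Library.Landau_Symbols"
begin

definition relu_ab :: "real \<Rightarrow> real \<Rightarrow> real \<Rightarrow> real" where
  "relu_ab \<alpha> \<beta> x = (if x \<ge> 0 then \<alpha> * x else \<beta> * x)"

definition is_adjacency :: "real^'n^'n \<Rightarrow> bool" where
  "is_adjacency A \<longleftrightarrow> (\<forall>i j. A$i$j = 0 \<or> A$i$j = 1) \<and> (\<forall>i j. A$i$j = A$j$i) \<and> (\<forall>i. A$i$i = 0)"

definition degree :: "real^'n^'n \<Rightarrow> 'n \<Rightarrow> real" where
  "degree A i = (\<Sum>j\<in>UNIV. A$i$j)"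

definition Dt_inv_sqrt :: "real^'n^'n \<Rightarrow> real^'n^'n" where
  "Dt_inv_sqrt A = (\<chi> i j. if i = j then 1 / sqrt (1 + degree A i) else 0)"

definition A_hat :: "real^'n^'n \<Rightarrow> real^'n^'n" where
  "A_hat A = Dt_inv_sqrt A ** (A + mat 1) ** Dt_inv_sqrt A"

definition dirichlet :: "real^'n^'n \<Rightarrow> real^'n \<Rightarrow> real" where
  "dirichlet A x = x \<bullet> ((mat 1 - A_hat A) *v x)"

text \<open>Real eigenvalues of a square matrix (Ahat is symmetric, so all its eigenvalues are real).\<close>
definition is_eigenvalue :: "real^'n^'n \<Rightarrow> real \<Rightarrow> bool" where
  "is_eigenvalue M \<mu> \<longleftrightarrow> (\<exists>v. v \<noteq> 0 \<and> M *v v = \<mu> *\<^sub>R v)"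

definition lambda_gap :: "real^'n^'n \<Rightarrow> real" where
  "lambda_gap A = Max (insert 0 {\<bar>\<mu>\<bar> | \<mu>. is_eigenvalue (A_hat A) \<mu> \<and> \<mu> \<noteq> 1})"

definition std_gauss_vec :: "(real^'n) measure" where
  "std_gauss_vec = distr (PiM UNIV (\<lambda>_. density lborel std_normal_density)) borel (\<lambda>f. \<chi> i. f i)"

text \<open>Centered Gaussian N(0,Sigma) for positive semidefinite Sigma: law of L z with
  L L^T = Sigma and z ~ N(0,I) (the law does not depend on the choice of L).\<close>
definition gauss_vec :: "real^'n^'n \<Rightarrow> (real^'n) measure" where
  "gauss_vec \<Sigma> = distr (std_gauss_vec :: (real^'n) measure) borel (\<lambda>z. (SOME L. L ** transpose L = \<Sigma>) *v z)"

definition G_map :: "(real \<Rightarrow> real) \<Rightarrow> real^'n^'n \<Rightarrow> real^'n^'n" where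
  "G_map \<sigma> \<Sigma> = (\<chi> i j. \<integral>h. \<sigma> (h$i) * \<sigma> (h$j) \<partial>gauss_vec \<Sigma>)"

text \<open>Sigma^(l) for l >= 1 (value at l = 0 is irrelevant and set to 0):
  Sigma^(1) = sw2/d0 Ahat X X^T Ahat,  Sigma^(l+1) = sw2 Ahat G(Sigma^(l)) Ahat.\<close>
primrec Sigma_l :: "(real \<Rightarrow> real) \<Rightarrow> real \<Rightarrow> real^'n^'n \<Rightarrow> real^'d^'n \<Rightarrow> nat \<Rightarrow> real^'n^'n" where
  "Sigma_l \<sigma> sw2 A X 0 = 0"
| "Sigma_l \<sigma> sw2 A X (Suc l) =
     (if l = 0 then (sw2 / real CARD('d)) *\<^sub>R (A_hat A ** X ** transpose X ** A_hat A)
      else sw2 *\<^sub>R (A_hat A ** G_map \<sigma> (Sigma_l \<sigma> sw2 A X l) ** A_hat A))"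

end

theory Submission
  imports Defs
begin

text \<open>Let E_l be the expected Dirichlet energy under N(0, Sigma_l). For a centred Gaussian h
  with covariance S one has E[h' M h] = <M, S> (Frobenius pairing), so the recursion
  Sigma_(l+1) = sw2 Ahat G(Sigma_l) Ahat with symmetric Ahat gives
  E_(l+1) = sw2 E[s' Ahat L Ahat s], where s = sigma(h), h ~ N(0, Sigma_l) and L = I - Ahat.
  The Dirichlet energy is a sum of squares over the edges, so L is positive semidefinite and every
  eigenvalue of Ahat is at most 1; diagonalising Ahat then gives Ahat L Ahat <= lambda^2 L.
  Edge by edge, Dir(sigma(h)) + Dir(sigma(-h)) <= (alpha^2 + beta^2) Dir(h), and h and -h have
  the same law, so E Dir(sigma(h)) <= (alpha^2 + beta^2)/2 E Dir(h). Hence E_(l+1) <= c E_l for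
  l >= 1 with c = lambda^2 sw2 (alpha^2 + beta^2)/2.\<close>

section \<open>Symmetric matrices\<close>

lemma symmetric_matrix_inner_commute:
  fixes M :: "real^'n^'n"
  assumes "transpose M = M"
  shows "x \<bullet> (M *v y) = y \<bullet> (M *v x)"
proof -
  have "x \<bullet> (M *v y) = (transpose M *v x) \<bullet> y"
    by (simp add: dot_lmul_matrix transpose_matrix_vector)
  then show ?thesis using assms by (simp add: inner_commute)
qed

lemma inner_matrix_vector_eq_sum:
  "x \<bullet> (M *v y) = (\<Sum>i\<in>UNIV. \<Sum>j\<in>UNIV. x$i * M$i$j * y$j)"
  unfolding inner_vec_def matrix_vector_mult_def by (simp add: sum_distrib_left mult_ac)

lemma linear_coeff_zero_if_quadratic_nonpos:
  fixes a b :: real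
  assumes "\<And>t. 2 * t * a + t\<^sup>2 * b \<le> 0"
  shows "a = 0"
proof -
  define K where "K = \<bar>b\<bar> + 1"
  have K: "K > 0" "2 * K + b > 0" unfolding K_def by (auto simp: abs_if)
  have "a\<^sup>2 * (2 * K + b) = K\<^sup>2 * (2 * (a / K) * a + (a / K)\<^sup>2 * b)"
    using K by (simp add: field_simps power2_eq_square)
  also have "\<dots> \<le> 0" using assms[of "a / K"] by (simp add: mult_nonneg_nonpos)
  finally have "a\<^sup>2 \<le> 0" using K by (simp add: mult_le_0_iff)
  then show ?thesis by simp
qed

lemma rayleigh_quotient_maximizer:
  fixes M :: "real^'n^'n"
  assumes S: "subspace S" "S \<noteq> {0}"
  obtains v where "v \<in> S" "norm v = 1"
    "\<And>y. y \<in> S \<Longrightarrow> y \<bullet> (M *v y) \<le> (v \<bullet> (M *v v)) * (y \<bullet> y)"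
proof -
  let ?K = "S \<inter> sphere 0 1"
  obtain x where "x \<in> S" "x \<noteq> 0" using S subspace_0 by blast
  then have "x /\<^sub>R norm x \<in> ?K" using S by (auto simp: subspace_scale)
  moreover have "compact ?K" by (intro closed_Int_compact closed_subspace S compact_sphere)
  moreover have "continuous_on ?K (\<lambda>x. x \<bullet> (M *v x))" by (intro continuous_intros)
  ultimately obtain v where v: "v \<in> ?K"
    and max: "\<And>y. y \<in> ?K \<Longrightarrow> y \<bullet> (M *v y) \<le> v \<bullet> (M *v v)"
    using continuous_attains_sup[of ?K "\<lambda>x. x \<bullet> (M *v x)"] by blast
  have "y \<bullet> (M *v y) \<le> (v \<bullet> (M *v v)) * (y \<bullet> y)" if "y \<in> S" for y
  proof (cases "y = 0")
    case False
    then have "y /\<^sub>R norm y \<in> ?K" using that S by (auto simp: subspace_scale)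
    then have "(y /\<^sub>R norm y) \<bullet> (M *v (y /\<^sub>R norm y)) \<le> v \<bullet> (M *v v)" by (rule max)
    then have "(y \<bullet> (M *v y)) / (norm y)\<^sup>2 \<le> v \<bullet> (M *v v)"
      by (simp add: matrix_vector_mult_scaleR power2_eq_square divide_inverse mult_ac)
    then show ?thesis using False by (simp add: divide_le_eq power2_norm_eq_inner)
  qed simp
  then show ?thesis using that v by auto
qed

lemma symmetric_matrix_eigenvector_in_invariant_subspace:
  fixes M :: "real^'n^'n"
  assumes sym: "transpose M = M" and S: "subspace S" "S \<noteq> {0}"
    and inv: "\<And>x. x \<in> S \<Longrightarrow> M *v x \<in> S"
  obtains v \<mu> where "v \<in> S" "norm v = 1" "M *v v = \<mu> *\<^sub>R v"
proof -
  obtain v where v: "v \<in> S" "norm v = 1"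
    and ray: "\<And>y. y \<in> S \<Longrightarrow> y \<bullet> (M *v y) \<le> (v \<bullet> (M *v v)) * (y \<bullet> y)"
    using rayleigh_quotient_maximizer[OF S] by blast
  define \<mu> where "\<mu> = v \<bullet> (M *v v)"
  have vv: "v \<bullet> v = 1" using v by (simp add: norm_eq_1)
  have orth: "w \<bullet> (M *v v) = 0" if "w \<in> S" "w \<bullet> v = 0" for w
  proof (rule linear_coeff_zero_if_quadratic_nonpos)
    fix t
    have "v + t *\<^sub>R w \<in> S" using that v S by (simp add: subspace_add subspace_scale)
    from ray[OF this]
    show "2 * t * (w \<bullet> (M *v v)) + t\<^sup>2 * (w \<bullet> (M *v w) - \<mu> * (w \<bullet> w)) \<le> 0"
      using symmetric_matrix_inner_commute[OF sym, of v w] that(2)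
      by (simp add: matrix_vector_right_distrib matrix_vector_mult_scaleR inner_add_left
          inner_add_right \<mu>_def vv inner_commute[of v w] power2_eq_square algebra_simps)
  qed
  define u where "u = M *v v - \<mu> *\<^sub>R v"
  have uS: "u \<in> S" unfolding u_def using v S inv by (simp add: subspace_diff subspace_scale)
  have uv: "u \<bullet> v = 0"
    unfolding u_def using vv by (simp add: \<mu>_def inner_diff_left inner_commute[of "M *v v" v])
  have "u \<bullet> u = u \<bullet> (M *v v) - \<mu> * (u \<bullet> v)"
    by (subst (2) u_def) (simp add: inner_diff_right)
  then have "u = 0" using orth[OF uS uv] uv by simp
  then show ?thesis using that v unfolding u_def by simp
qed

lemma dim_orthogonal_complement_in_subspace_less:
  fixes v :: "'a::euclidean_space"
  assumes "subspace S" "v \<in> S" "v \<noteq> 0"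
  shows "dim {x\<in>S. x \<bullet> v = 0} < dim S"
proof (rule dim_psubset)
  have "subspace {x\<in>S. x \<bullet> v = 0}"
    using assms(1) by (auto simp: subspace_def inner_add_left)
  then have spans: "span {x\<in>S. x \<bullet> v = 0} = {x\<in>S. x \<bullet> v = 0}" "span S = S"
    using assms(1) by (simp_all add: span_eq_iff)
  have "v \<notin> {x\<in>S. x \<bullet> v = 0}" using assms(3) by simp
  then show "span {x\<in>S. x \<bullet> v = 0} \<subset> span S" unfolding spans using assms(2) by blast
qed

lemma span_insert_orthogonal_complement:
  fixes v :: "'a::euclidean_space"
  assumes S: "subspace S" and v: "v \<in> S" "norm v = 1" and B: "span B = {x\<in>S. x \<bullet> v = 0}"
  shows "span (insert v B) = S"
proof
  have "B \<subseteq> S" using B span_superset by blast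
  then show "span (insert v B) \<subseteq> S" using S v by (intro span_minimal) auto
  show "S \<subseteq> span (insert v B)"
  proof
    fix x assume "x \<in> S"
    then have "x - (x \<bullet> v) *\<^sub>R v \<in> span B" unfolding B using v S
      by (simp add: subspace_diff subspace_scale inner_diff_left norm_eq_1[symmetric])
    then show "x \<in> span (insert v B)" using span_breakdown_eq by metis
  qed
qed

lemma symmetric_matrix_invariant_subspace_eigenbasis:
  fixes M :: "real^'n^'n"
  assumes sym: "transpose M = M"
  shows "subspace S \<Longrightarrow> (\<And>x. x \<in> S \<Longrightarrow> M *v x \<in> S) \<Longrightarrow>
    \<exists>B. B \<subseteq> S \<and> pairwise orthogonal B \<and> (\<forall>b\<in>B. norm b = 1) \<and>
        (\<forall>b\<in>B. \<exists>\<mu>. M *v b = \<mu> *\<^sub>R b) \<and> span B = S"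
proof (induction "dim S" arbitrary: S rule: less_induct)
  case less
  show ?case
  proof (cases "S = {0}")
    case True
    then show ?thesis by (intro exI[of _ "{}"]) auto
  next
    case False
    obtain v \<mu> where v: "v \<in> S" "norm v = 1" "M *v v = \<mu> *\<^sub>R v"
      using symmetric_matrix_eigenvector_in_invariant_subspace[OF sym less.prems(1) False less.prems(2)] .
    define S' where "S' = {x\<in>S. x \<bullet> v = 0}"
    have "subspace S'" unfolding S'_def using less.prems(1) by (auto simp: subspace_def inner_add_left)
    moreover have "M *v x \<in> S'" if "x \<in> S'" for x
    proof -
      have "(M *v x) \<bullet> v = x \<bullet> (M *v v)"
        using symmetric_matrix_inner_commute[OF sym, of v x] by (simp add: inner_commute)
      then show ?thesis using that v(3) less.prems(2) unfolding S'_def by simp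
    qed
    moreover have "dim S' < dim S"
      unfolding S'_def using v less.prems(1) by (intro dim_orthogonal_complement_in_subspace_less) auto
    ultimately obtain B' where B': "B' \<subseteq> S'" "pairwise orthogonal B'" "\<forall>b\<in>B'. norm b = 1"
      "\<forall>b\<in>B'. \<exists>\<mu>. M *v b = \<mu> *\<^sub>R b" "span B' = S'"
      using less.hyps by blast
    have "span (insert v B') = S"
      using span_insert_orthogonal_complement less.prems(1) v(1,2) B'(5) unfolding S'_def by blast
    moreover have "pairwise orthogonal (insert v B')"
      using B'(1,2) unfolding pairwise_insert S'_def orthogonal_def by (auto simp: inner_commute)
    ultimately show ?thesis
      using B' v by (intro exI[of _ "insert v B'"]) (auto simp: S'_def)
  qed
qed

lemma symmetric_matrix_orthonormal_eigenbasis: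
  fixes M :: "real^'n^'n"
  assumes "transpose M = M"
  obtains B :: "(real^'n) set" and \<mu> :: "real^'n \<Rightarrow> real"
  where "finite B" "pairwise orthogonal B" "\<And>b. b \<in> B \<Longrightarrow> norm b = 1"
    "\<And>b. b \<in> B \<Longrightarrow> M *v b = \<mu> b *\<^sub>R b"
    "\<And>x. (\<Sum>b\<in>B. (x \<bullet> b) *\<^sub>R b) = x"
proof -
  obtain B where B: "pairwise orthogonal B" "\<forall>b\<in>B. norm b = 1"
     "\<forall>b\<in>B. \<exists>\<mu>. M *v b = \<mu> *\<^sub>R b" "span B = UNIV"
    using symmetric_matrix_invariant_subspace_eigenbasis[OF assms, of UNIV] by auto
  have "0 \<notin> B" using B(2) by auto
  then have fin: "finite B"
    using pairwise_orthogonal_independent[OF B(1)] independent_imp_finite by blast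
  show ?thesis
  proof (rule that)
    fix b assume "b \<in> B"
    then obtain \<mu> where eig: "M *v b = \<mu> *\<^sub>R b" and "b \<bullet> b = 1"
      using B(2,3) by (auto simp: norm_eq_1)
    then show "M *v b = (b \<bullet> (M *v b)) *\<^sub>R b" by simp
  next
    show "(\<Sum>b\<in>B. (x \<bullet> b) *\<^sub>R b) = x" for x
      using B(1,2,4) fin by (intro orthonormal_basis_expand) auto
  qed (use fin B in auto)
qed

lemma matrix_vector_eigenbasis_expansion:
  fixes M :: "real^'n^'n"
  assumes "\<And>x. (\<Sum>b\<in>B. (x \<bullet> b) *\<^sub>R b) = x" "\<And>b. b \<in> B \<Longrightarrow> M *v b = \<mu> b *\<^sub>R b"
  shows "M *v x = (\<Sum>b\<in>B. (\<mu> b * (x \<bullet> b)) *\<^sub>R b)"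
proof -
  have "M *v x = (\<Sum>b\<in>B. (x \<bullet> b) *\<^sub>R (M *v b))"
    by (subst (1) assms(1)[symmetric, of x])
       (simp add: matrix_vector_mult_scaleR linear_sum[OF matrix_vector_mul_linear] o_def)
  also have "\<dots> = (\<Sum>b\<in>B. (\<mu> b * (x \<bullet> b)) *\<^sub>R b)"
    using assms(2) by (intro sum.cong) (auto simp: mult.commute)
  finally show ?thesis .
qed

lemma quadratic_form_eigenbasis_expansion:
  fixes M :: "real^'n^'n"
  assumes "\<And>x. (\<Sum>b\<in>B. (x \<bullet> b) *\<^sub>R b) = x" "\<And>b. b \<in> B \<Longrightarrow> M *v b = \<mu> b *\<^sub>R b"
  shows "x \<bullet> (M *v x) = (\<Sum>b\<in>B. \<mu> b * (x \<bullet> b)\<^sup>2)"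
proof -
  have "x \<bullet> (M *v x) = x \<bullet> (\<Sum>b\<in>B. (\<mu> b * (x \<bullet> b)) *\<^sub>R b)"
    using matrix_vector_eigenbasis_expansion[OF assms] by metis
  then show ?thesis by (simp add: inner_sum_right power2_eq_square mult_ac)
qed

lemma inner_orthonormal_sum:
  fixes B :: "'a::real_inner set"
  assumes "finite B" "pairwise orthogonal B" "\<And>c. c \<in> B \<Longrightarrow> norm c = 1" "b \<in> B"
  shows "b \<bullet> (\<Sum>c\<in>B. a c *\<^sub>R c) = a b"
proof -
  have "b \<bullet> (\<Sum>c\<in>B. a c *\<^sub>R c) = (\<Sum>c\<in>B. if c = b then a b else 0)"
    unfolding inner_sum_right using assms(2-4)
    by (intro sum.cong) (auto simp: norm_eq_1 pairwise_def orthogonal_def)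
  then show ?thesis using assms(1,4) by simp
qed

lemma symmetric_matrix_finite_eigenvalues:
  fixes M :: "real^'n^'n"
  assumes sym: "transpose M = M"
  shows "finite {\<mu>. is_eigenvalue M \<mu>}"
proof -
  obtain B \<mu> where B: "finite B" "pairwise orthogonal B" "\<And>b. b \<in> B \<Longrightarrow> norm b = 1"
    and eig: "\<And>b. b \<in> B \<Longrightarrow> M *v b = \<mu> b *\<^sub>R b"
    and expand: "\<And>x. (\<Sum>b\<in>B. (x \<bullet> b) *\<^sub>R b) = x"
    using symmetric_matrix_orthonormal_eigenbasis[OF sym] by blast
  have "m \<in> \<mu> ` B" if eigval: "is_eigenvalue M m" for m
  proof -
    obtain v where "v \<noteq> 0" and vm: "M *v v = m *\<^sub>R v"
      using eigval unfolding is_eigenvalue_def by blast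
    have "\<exists>b\<in>B. v \<bullet> b \<noteq> 0"
    proof (rule ccontr)
      assume "\<not> ?thesis"
      then have "(\<Sum>b\<in>B. (v \<bullet> b) *\<^sub>R b) = 0" by simp
      then show False using expand[of v] \<open>v \<noteq> 0\<close> by simp
    qed
    then obtain b where b: "b \<in> B" "v \<bullet> b \<noteq> 0" by blast
    have "m * (v \<bullet> b) = v \<bullet> (M *v b)"
      using vm symmetric_matrix_inner_commute[OF sym, of b v] by (simp add: inner_commute)
    also have "\<dots> = \<mu> b * (v \<bullet> b)" using eig[OF b(1)] by simp
    finally have "m = \<mu> b" using b(2) by simp
    then show ?thesis using b(1) by blast
  qed
  then have "{\<mu>. is_eigenvalue M \<mu>} \<subseteq> \<mu> ` B" by blast
  then show ?thesis by (rule finite_subset) (use B(1) in simp)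
qed

lemma psd_matrix_factorization:
  fixes G :: "real^'n^'n"
  assumes sym: "transpose G = G" and psd: "\<And>v. 0 \<le> v \<bullet> (G *v v)"
  obtains K :: "real^'n^'n" where "K ** transpose K = G"
proof -
  obtain B \<mu> where B: "finite B" "pairwise orthogonal B" "\<And>b. b \<in> B \<Longrightarrow> norm b = 1"
    and eig: "\<And>b. b \<in> B \<Longrightarrow> G *v b = \<mu> b *\<^sub>R b"
    and expand: "\<And>x. (\<Sum>b\<in>B. (x \<bullet> b) *\<^sub>R b) = x"
    using symmetric_matrix_orthonormal_eigenbasis[OF sym] by blast
  have \<mu>_nonneg: "0 \<le> \<mu> b" if "b \<in> B" for b
    using psd[of b] eig[OF that] B(3)[OF that] by (simp add: norm_eq_1)
  define K :: "real^'n^'n" where "K = (\<chi> i j. \<Sum>b\<in>B. sqrt (\<mu> b) * b$i * b$j)"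
  have K_sym: "transpose K = K" unfolding K_def transpose_def by (simp add: mult_ac)
  have Kx: "K *v x = (\<Sum>b\<in>B. (sqrt (\<mu> b) * (b \<bullet> x)) *\<^sub>R b)" for x
    unfolding K_def matrix_vector_mult_def inner_vec_def
    by (simp add: vec_eq_iff sum_component sum_distrib_left sum_distrib_right mult_ac sum.swap[of _ B])
  have "(K ** transpose K) *v x = G *v x" for x
  proof -
    have "(K ** transpose K) *v x = (\<Sum>b\<in>B. (sqrt (\<mu> b) * (b \<bullet> (K *v x))) *\<^sub>R b)"
      unfolding K_sym by (simp add: matrix_vector_mul_assoc[symmetric] Kx)
    also have "\<dots> = (\<Sum>b\<in>B. (\<mu> b * (x \<bullet> b)) *\<^sub>R b)"
      using B \<mu>_nonneg by (intro sum.cong refl) (simp add: Kx inner_orthonormal_sum inner_commute)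
    also have "\<dots> = G *v x"
      using matrix_vector_eigenbasis_expansion[OF expand eig] by simp
    finally show ?thesis .
  qed
  then have "K ** transpose K = G" by (simp add: matrix_eq)
  then show ?thesis by (rule that)
qed

lemma scaled_sandwich_factorization:
  fixes M G K :: "real^'n^'n"
  assumes "0 \<le> s" "transpose M = M" "K ** transpose K = G"
  shows "\<exists>L::real^'n^'n. L ** transpose L = s *\<^sub>R (M ** G ** M)"
proof
  show "(sqrt s *\<^sub>R (M ** K)) ** transpose (sqrt s *\<^sub>R (M ** K)) = s *\<^sub>R (M ** G ** M)"
    using assms(1,2) assms(3)[symmetric] by (simp add: transpose_scalar matrix_transpose_mul
        matrix_scalar_ac scalar_matrix_assoc[symmetric] matrix_mul_assoc)
qed

lemma symmetric_sandwich_le_spectral_gap: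
  fixes M :: "real^'n^'n"
  assumes sym: "transpose M = M"
    and psd: "\<And>x. 0 \<le> x \<bullet> ((mat 1 - M) *v x)"
    and gap: "\<And>\<mu>. is_eigenvalue M \<mu> \<Longrightarrow> \<mu> \<noteq> 1 \<Longrightarrow> \<bar>\<mu>\<bar> \<le> c"
  shows "x \<bullet> ((M ** (mat 1 - M) ** M) *v x) \<le> c\<^sup>2 * (x \<bullet> ((mat 1 - M) *v x))"
proof -
  obtain B \<mu> where B: "finite B" "pairwise orthogonal B" "\<And>b. b \<in> B \<Longrightarrow> norm b = 1"
    and eig: "\<And>b. b \<in> B \<Longrightarrow> M *v b = \<mu> b *\<^sub>R b"
    and expand: "\<And>x. (\<Sum>b\<in>B. (x \<bullet> b) *\<^sub>R b) = x"
    using symmetric_matrix_orthonormal_eigenbasis[OF sym] by blast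
  have L_eig: "(mat 1 - M) *v b = (1 - \<mu> b) *\<^sub>R b" if "b \<in> B" for b
    using eig[OF that] by (simp add: matrix_vector_mult_diff_rdistrib algebra_simps)
  have W_eig: "(M ** (mat 1 - M) ** M) *v b = ((\<mu> b)\<^sup>2 * (1 - \<mu> b)) *\<^sub>R b" if "b \<in> B" for b
    using eig[OF that] L_eig[OF that]
    by (simp add: matrix_vector_mul_assoc[symmetric] matrix_vector_mult_scaleR power2_eq_square mult_ac)
  have coeff_le: "(\<mu> b)\<^sup>2 * (1 - \<mu> b) \<le> c\<^sup>2 * (1 - \<mu> b)" if "b \<in> B" for b
  proof (cases "\<mu> b = 1")
    case False
    have "b \<noteq> 0" using B(3)[OF that] by auto
    then have "\<bar>\<mu> b\<bar> \<le> c" using gap eig[OF that] False unfolding is_eigenvalue_def by blast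
    then have "(\<mu> b)\<^sup>2 \<le> c\<^sup>2" by (metis abs_ge_zero power2_abs power_mono)
    moreover have "0 \<le> 1 - \<mu> b"
      using psd[of b] L_eig[OF that] B(3)[OF that] by (simp add: norm_eq_1)
    ultimately show ?thesis by (rule mult_right_mono)
  qed simp
  have "(\<Sum>b\<in>B. (\<mu> b)\<^sup>2 * (1 - \<mu> b) * (x \<bullet> b)\<^sup>2) \<le> (\<Sum>b\<in>B. c\<^sup>2 * (1 - \<mu> b) * (x \<bullet> b)\<^sup>2)"
    by (rule sum_mono, rule mult_right_mono[OF coeff_le]) auto
  moreover have "x \<bullet> ((M ** (mat 1 - M) ** M) *v x) = (\<Sum>b\<in>B. (\<mu> b)\<^sup>2 * (1 - \<mu> b) * (x \<bullet> b)\<^sup>2)"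
    by (rule quadratic_form_eigenbasis_expansion[OF expand W_eig])
  moreover have "x \<bullet> ((mat 1 - M) *v x) = (\<Sum>b\<in>B. (1 - \<mu> b) * (x \<bullet> b)\<^sup>2)"
    by (rule quadratic_form_eigenbasis_expansion[OF expand L_eig])
  ultimately show ?thesis by (simp add: sum_distrib_left mult.assoc)
qed

definition frobenius_inner :: "real^'n^'m \<Rightarrow> real^'n^'m \<Rightarrow> real" where
  "frobenius_inner M N = (\<Sum>i\<in>UNIV. \<Sum>j\<in>UNIV. M$i$j * N$i$j)"

lemma frobenius_inner_eq_trace: "frobenius_inner M N = trace (transpose M ** N)"
proof -
  have "frobenius_inner M N = (\<Sum>j\<in>UNIV. \<Sum>i\<in>UNIV. M$i$j * N$i$j)"
    unfolding frobenius_inner_def by (rule sum.swap)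
  also have "\<dots> = trace (transpose M ** N)"
    unfolding trace_def matrix_matrix_mult_def transpose_def by simp
  finally show ?thesis .
qed

lemma frobenius_inner_mult:
  fixes M X G Y :: "real^'n^'n"
  shows "frobenius_inner M (X ** G ** Y) = frobenius_inner (transpose X ** M ** transpose Y) G"
proof -
  have "frobenius_inner M (X ** G ** Y) = trace ((transpose M ** X ** G) ** Y)"
    unfolding frobenius_inner_eq_trace by (simp add: matrix_mul_assoc)
  also have "\<dots> = trace (Y ** (transpose M ** X ** G))" by (rule trace_mul_sym)
  also have "\<dots> = frobenius_inner (transpose X ** M ** transpose Y) G"
    unfolding frobenius_inner_eq_trace by (simp add: matrix_transpose_mul matrix_mul_assoc)
  finally show ?thesis .
qed

lemma frobenius_inner_commute: "frobenius_inner M N = frobenius_inner N M"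
  unfolding frobenius_inner_def by (simp add: mult.commute)

lemma quadratic_form_eq_frobenius_inner:
  "x \<bullet> (M *v x) = frobenius_inner M (\<chi> i j. x$i * x$j)"
  unfolding inner_matrix_vector_eq_sum frobenius_inner_def by (simp add: mult_ac)

section \<open>Normalised adjacency matrix and Dirichlet energy\<close>

definition inv_sqrt_degree :: "real^'n^'n \<Rightarrow> 'n \<Rightarrow> real" where
  "inv_sqrt_degree A i = 1 / sqrt (1 + degree A i)"

lemma adjacency_nonneg: "is_adjacency A \<Longrightarrow> 0 \<le> A$i$j"
  unfolding is_adjacency_def by (metis order.refl zero_le_one)

lemma degree_nonneg: "is_adjacency A \<Longrightarrow> 0 \<le> degree A i"
  unfolding degree_def by (intro sum_nonneg adjacency_nonneg)

lemma inv_sqrt_degree_pos: "is_adjacency A \<Longrightarrow> 0 < inv_sqrt_degree A i"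
  using degree_nonneg[of A i] unfolding inv_sqrt_degree_def by simp

lemma inv_sqrt_degree_sq: "is_adjacency A \<Longrightarrow> (1 + degree A i) * (inv_sqrt_degree A i)\<^sup>2 = 1"
  using degree_nonneg[of A i] unfolding inv_sqrt_degree_def by (simp add: power_divide)

lemma A_hat_entry:
  "A_hat A $ i $ j = inv_sqrt_degree A i * (A$i$j + (if i = j then 1 else 0)) * inv_sqrt_degree A j"
  unfolding A_hat_def Dt_inv_sqrt_def inv_sqrt_degree_def
  by (simp add: matrix_matrix_mult_def mat_def if_distrib[of "\<lambda>x. x * _"]
      if_distrib[of "\<lambda>x. _ * x"] cong: if_cong)

lemma A_hat_symmetric: "is_adjacency A \<Longrightarrow> transpose (A_hat A) = A_hat A"
  unfolding transpose_def is_adjacency_def by (simp add: A_hat_entry vec_eq_iff mult_ac)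

definition edge_energy :: "real^'n^'n \<Rightarrow> ('n \<Rightarrow> real) \<Rightarrow> real" where
  "edge_energy A y = (\<Sum>i\<in>UNIV. \<Sum>j\<in>UNIV. A$i$j * (y i - y j)\<^sup>2) / 2"

lemma edge_energy_nonneg: "is_adjacency A \<Longrightarrow> 0 \<le> edge_energy A y"
  unfolding edge_energy_def by (intro divide_nonneg_pos sum_nonneg mult_nonneg_nonneg adjacency_nonneg) auto

lemma edge_energy_eq_degree_form:
  assumes "\<And>i j. A$i$j = A$j$i"
  shows "edge_energy A y = (\<Sum>i\<in>UNIV. \<Sum>j\<in>UNIV. A$i$j * y i * y i - A$i$j * y i * y j)"
proof -
  have swap: "(\<Sum>i\<in>UNIV. \<Sum>j\<in>UNIV. A$i$j * y j * y j) = (\<Sum>i\<in>UNIV. \<Sum>j\<in>UNIV. A$i$j * y i * y i)"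
    using assms by (subst sum.swap) simp
  have "(\<Sum>i\<in>UNIV. \<Sum>j\<in>UNIV. A$i$j * (y i - y j)\<^sup>2) =
    (\<Sum>i\<in>UNIV. \<Sum>j\<in>UNIV. A$i$j * y i * y i) + (\<Sum>i\<in>UNIV. \<Sum>j\<in>UNIV. A$i$j * y j * y j)
      - 2 * (\<Sum>i\<in>UNIV. \<Sum>j\<in>UNIV. A$i$j * y i * y j)"
    by (simp add: power2_eq_square algebra_simps sum.distrib sum_subtractf sum_distrib_left)
  then show ?thesis unfolding edge_energy_def swap by (simp add: sum_subtractf)
qed

lemma dirichlet_eq_edge_energy:
  assumes adj: "is_adjacency A"
  shows "dirichlet A x = edge_energy A (\<lambda>i. inv_sqrt_degree A i * x$i)"
proof -
  define y where "y i = inv_sqrt_degree A i * x$i" for i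
  have x_sq: "x$i * x$i = (1 + degree A i) * (y i * y i)" for i
    using inv_sqrt_degree_sq[OF adj, of i] unfolding y_def by (simp add: power2_eq_square algebra_simps)
  have row: "(\<Sum>j\<in>UNIV. x$i * (mat 1 - A_hat A)$i$j * x$j)
      = x$i * x$i - y i * y i - (\<Sum>j\<in>UNIV. A$i$j * y i * y j)" for i
  proof -
    have "(\<Sum>j\<in>UNIV. x$i * (mat 1 - A_hat A)$i$j * x$j) = (\<Sum>j\<in>UNIV.
        (if i = j then x$i * x$j - y i * y j else 0) - A$i$j * y i * y j)"
      by (intro sum.cong) (auto simp: A_hat_entry mat_def y_def algebra_simps)
    then show ?thesis by (simp add: sum_subtractf)
  qed
  have "dirichlet A x = (\<Sum>i\<in>UNIV. x$i * x$i - y i * y i - (\<Sum>j\<in>UNIV. A$i$j * y i * y j))"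
    unfolding dirichlet_def inner_matrix_vector_eq_sum row ..
  also have "\<dots> = (\<Sum>i\<in>UNIV. \<Sum>j\<in>UNIV. A$i$j * y i * y i - A$i$j * y i * y j)"
    by (intro sum.cong) (auto simp: x_sq degree_def sum_subtractf sum_distrib_left sum_distrib_right algebra_simps)
  also have "\<dots> = edge_energy A y"
    using adj unfolding is_adjacency_def by (intro edge_energy_eq_degree_form[symmetric]) blast
  finally show ?thesis unfolding y_def .
qed

lemma dirichlet_nonneg: "is_adjacency A \<Longrightarrow> 0 \<le> dirichlet A x"
  using dirichlet_eq_edge_energy edge_energy_nonneg by metis

lemma abs_eigenvalue_le_lambda_gap:
  assumes "is_adjacency A" "is_eigenvalue (A_hat A) \<mu>" "\<mu> \<noteq> 1"
  shows "\<bar>\<mu>\<bar> \<le> lambda_gap A"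
proof -
  let ?E = "{\<bar>\<mu>\<bar> | \<mu>. is_eigenvalue (A_hat A) \<mu> \<and> \<mu> \<noteq> 1}"
  have "?E \<subseteq> abs ` {\<mu>. is_eigenvalue (A_hat A) \<mu>}" by blast
  then have "finite ?E"
    using symmetric_matrix_finite_eigenvalues[OF A_hat_symmetric[OF assms(1)]] finite_surj by blast
  then show ?thesis unfolding lambda_gap_def using assms(2,3) by (intro Max_ge) auto
qed

lemma A_hat_sandwich_le_lambda_gap:
  assumes "is_adjacency A"
  shows "x \<bullet> ((A_hat A ** (mat 1 - A_hat A) ** A_hat A) *v x) \<le> (lambda_gap A)\<^sup>2 * dirichlet A x"
  unfolding dirichlet_def
  using symmetric_sandwich_le_spectral_gap[OF A_hat_symmetric dirichlet_nonneg[unfolded dirichlet_def]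
      abs_eigenvalue_le_lambda_gap] assms by blast

lemma relu_ab_eq_abs_form: "relu_ab a b x = (a + b) / 2 * x + (a - b) / 2 * \<bar>x\<bar>"
  unfolding relu_ab_def by (auto simp: field_simps)

lemma borel_measurable_relu_ab[measurable]: "relu_ab a b \<in> borel_measurable borel"
  unfolding relu_ab_eq_abs_form[abs_def] by measurable

lemma abs_relu_ab_le: "\<bar>relu_ab a b x\<bar> \<le> (\<bar>a\<bar> + \<bar>b\<bar>) * \<bar>x\<bar>"
  unfolding relu_ab_def by (auto simp: abs_mult intro: mult_right_mono)

lemma relu_ab_scale: "0 \<le> c \<Longrightarrow> relu_ab a b (c * x) = c * relu_ab a b x"
  unfolding relu_ab_def by (auto simp: zero_le_mult_iff mult_le_0_iff)

text \<open>Writing the activation as \<open>p x + q \<bar>x\<bar>\<close>, the cross terms cancel between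
  \<open>x\<close> and \<open>-x\<close>, and \<open>2 p\<^sup>2 + 2 q\<^sup>2 = a\<^sup>2 + b\<^sup>2\<close>.\<close>
lemma relu_ab_reflect_diff_le:
  "(relu_ab a b x - relu_ab a b y)\<^sup>2 + (relu_ab a b (-x) - relu_ab a b (-y))\<^sup>2
     \<le> (a\<^sup>2 + b\<^sup>2) * (x - y)\<^sup>2"
proof -
  define p q where "p = (a + b) / 2" and "q = (a - b) / 2"
  have relu: "relu_ab a b z = p * z + q * \<bar>z\<bar>" for z
    unfolding relu_ab_eq_abs_form p_def q_def ..
  have "(relu_ab a b x - relu_ab a b y)\<^sup>2 + (relu_ab a b (-x) - relu_ab a b (-y))\<^sup>2
      = 2 * p\<^sup>2 * (x - y)\<^sup>2 + 2 * q\<^sup>2 * (\<bar>x\<bar> - \<bar>y\<bar>)\<^sup>2"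
    unfolding relu by (simp add: power2_eq_square algebra_simps)
  also have "\<dots> \<le> 2 * p\<^sup>2 * (x - y)\<^sup>2 + 2 * q\<^sup>2 * (x - y)\<^sup>2"
    using abs_triangle_ineq3[of x y] by (intro add_left_mono mult_left_mono) (auto simp: abs_le_square_iff)
  also have "\<dots> = (a\<^sup>2 + b\<^sup>2) * (x - y)\<^sup>2"
    unfolding p_def q_def by (simp add: power2_eq_square field_simps)
  finally show ?thesis .
qed

lemma dirichlet_relu_reflect_le:
  assumes adj: "is_adjacency A"
  shows "dirichlet A (\<chi> i. relu_ab a b (h$i)) + dirichlet A (\<chi> i. relu_ab a b (- h$i))
    \<le> (a\<^sup>2 + b\<^sup>2) * dirichlet A h"
proof -
  define y where "y i = inv_sqrt_degree A i * h$i" for i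
  have "relu_ab a b (s * y i) = inv_sqrt_degree A i * relu_ab a b (s * h$i)" for s i
    using inv_sqrt_degree_pos[OF adj, of i] unfolding y_def
    by (simp add: mult.left_commute[of s] relu_ab_scale)
  then have "dirichlet A (\<chi> i. relu_ab a b (s * h$i)) = edge_energy A (\<lambda>i. relu_ab a b (s * y i))" for s
    unfolding dirichlet_eq_edge_energy[OF adj] by simp
  from this[of 1] this[of "-1"]
  have "dirichlet A (\<chi> i. relu_ab a b (h$i)) + dirichlet A (\<chi> i. relu_ab a b (- h$i))
    = (\<Sum>i\<in>UNIV. \<Sum>j\<in>UNIV. A$i$j * ((relu_ab a b (y i) - relu_ab a b (y j))\<^sup>2
        + (relu_ab a b (- y i) - relu_ab a b (- y j))\<^sup>2)) / 2"
    unfolding edge_energy_def by (simp add: add_divide_distrib[symmetric] sum.distrib[symmetric] distrib_left)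
  also have "\<dots> \<le> (\<Sum>i\<in>UNIV. \<Sum>j\<in>UNIV. A$i$j * ((a\<^sup>2 + b\<^sup>2) * (y i - y j)\<^sup>2)) / 2"
    by (intro divide_right_mono sum_mono mult_left_mono relu_ab_reflect_diff_le adjacency_nonneg[OF adj]) simp
  also have "\<dots> = (a\<^sup>2 + b\<^sup>2) * dirichlet A h"
    unfolding dirichlet_eq_edge_energy[OF adj] edge_energy_def y_def by (simp add: sum_distrib_left mult_ac)
  finally show ?thesis .
qed

section \<open>Centred Gaussian vectors\<close>

abbreviation iid_std_normal :: "('n \<Rightarrow> real) measure" where
  "iid_std_normal \<equiv> PiM UNIV (\<lambda>_. std_normal_distribution)"

lemma prob_space_std_normal_distribution: "prob_space std_normal_distribution"
  by (rule prob_space_normal_density) simp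

lemma measurable_vec_lambda_iid_std_normal:
  "(\<lambda>f. \<chi> i. f i) \<in> borel_measurable (iid_std_normal :: ('n::finite \<Rightarrow> real) measure)"
proof (subst borel_measurable_euclidean_space, intro ballI)
  fix b :: "real^'n" assume "b \<in> Basis"
  then obtain i u where b: "b = axis i u" unfolding Basis_vec_def by auto
  have "(\<lambda>f. f i * u) \<in> borel_measurable (iid_std_normal :: ('n \<Rightarrow> real) measure)" by measurable
  then show "(\<lambda>f. (\<chi> i. f i) \<bullet> b) \<in> borel_measurable (iid_std_normal :: ('n \<Rightarrow> real) measure)"
    unfolding b by (simp add: inner_axis)
qed

lemma sets_std_gauss_vec[simp]: "sets (std_gauss_vec :: (real^'n::finite) measure) = sets borel"
  unfolding std_gauss_vec_def by simp

lemma iid_std_normal_second_moment: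
  fixes i j :: "'n::finite"
  shows "integrable iid_std_normal (\<lambda>f. f i * f j)"
    and "(\<integral>f. f i * f j \<partial>iid_std_normal) = (if i = j then 1 else 0)"
proof -
  interpret product_sigma_finite "\<lambda>_::'n. std_normal_distribution"
    unfolding product_sigma_finite_def
    using prob_space_std_normal_distribution prob_space_imp_sigma_finite by blast
  define g :: "'n \<Rightarrow> real \<Rightarrow> real"
    where "g k x = (if k = i then x else 1) * (if k = j then x else 1)" for k x
  have prod_g: "(\<Prod>k\<in>UNIV. g k (f k)) = f i * f j" for f :: "'n \<Rightarrow> real"
    unfolding g_def prod.distrib by simp
  have g_pow: "g k = (\<lambda>x. x ^ ((if k = i then 1 else 0) + (if k = j then 1 else 0)))" for k
    unfolding g_def by (auto simp: power2_eq_square)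
  have int_g: "integrable std_normal_distribution (g k)" for k
    unfolding g_pow by (rule integrable_std_normal_distribution_moment)
  show "integrable iid_std_normal (\<lambda>f. f i * f j)"
    using product_integrable_prod[of UNIV g] int_g unfolding prod_g by simp
  have moment: "integral\<^sup>L std_normal_distribution (g k) =
      (if (k = i) = (k = j) then 1 else 0)" for k
    using std_normal_distribution_even_moments(1)[of 1] std_normal_distribution_even_moments(1)[of 0]
      integral_std_normal_distribution_moment_odd[of 1]
    unfolding g_pow by (auto simp: power2_eq_square)
  have "(\<integral>f. f i * f j \<partial>iid_std_normal) = (\<Prod>k\<in>UNIV. integral\<^sup>L std_normal_distribution (g k))"
    using product_integral_prod[of UNIV g] int_g unfolding prod_g by simp
  also have "\<dots> = (if i = j then 1 else 0)"
    unfolding moment by (cases "i = j") (auto intro: prod_zero)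
  finally show "(\<integral>f. f i * f j \<partial>iid_std_normal) = (if i = j then 1 else 0)" .
qed

lemma std_gauss_vec_second_moment:
  fixes i j :: "'n::finite"
  shows "integrable std_gauss_vec (\<lambda>z::real^'n. z$i * z$j)"
    and "(\<integral>z. z$i * z$j \<partial>(std_gauss_vec :: (real^'n) measure)) = (if i = j then 1 else 0)"
proof -
  have m: "(\<lambda>z::real^'n. z$i * z$j) \<in> borel_measurable borel" by measurable
  show "integrable std_gauss_vec (\<lambda>z::real^'n. z$i * z$j)"
    unfolding std_gauss_vec_def integrable_distr_eq[OF measurable_vec_lambda_iid_std_normal m]
    using iid_std_normal_second_moment(1)[of i j] by simp
  show "(\<integral>z. z$i * z$j \<partial>(std_gauss_vec :: (real^'n) measure)) = (if i = j then 1 else 0)"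
    unfolding std_gauss_vec_def integral_distr[OF measurable_vec_lambda_iid_std_normal m]
    using iid_std_normal_second_moment(2)[of i j] by simp
qed

lemma std_normal_distribution_reflect:
  "distr std_normal_distribution std_normal_distribution uminus = std_normal_distribution"
proof -
  interpret prob_space std_normal_distribution by (rule prob_space_std_normal_distribution)
  have "distributed std_normal_distribution lborel (\<lambda>x. x) std_normal_density"
    unfolding distributed_def by (auto simp: distr_id2)
  then have "distributed std_normal_distribution lborel (\<lambda>x. 0 + (-1) * x)
      (normal_density (0 + (-1) * 0) (\<bar>-1\<bar> * 1))"
    by (rule normal_density_affine) auto
  then have "distr std_normal_distribution lborel uminus = std_normal_distribution"
    unfolding distributed_def by simp
  moreover have "distr std_normal_distribution std_normal_distribution uminus =
      distr std_normal_distribution lborel uminus"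
    by (rule distr_cong) auto
  ultimately show ?thesis by simp
qed

lemma iid_std_normal_reflect:
  "distr iid_std_normal iid_std_normal (\<lambda>f i. - f i) = (iid_std_normal :: ('n::finite \<Rightarrow> real) measure)"
proof -
  have "distr iid_std_normal iid_std_normal (compose UNIV uminus) =
      PiM UNIV (\<lambda>i::'n. distr std_normal_distribution std_normal_distribution uminus)"
    by (rule distr_PiM_finite_prob_space') (auto simp: prob_space_std_normal_distribution)
  moreover have "compose UNIV uminus = (\<lambda>(f::'n \<Rightarrow> real) i. - f i)"
    unfolding compose_def by (simp add: restrict_UNIV)
  ultimately show ?thesis unfolding std_normal_distribution_reflect by simp
qed

lemma std_gauss_vec_reflect:
  "distr std_gauss_vec borel uminus = (std_gauss_vec :: (real^'n::finite) measure)"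
proof -
  let ?vec = "\<lambda>f. \<chi> i. f i" and ?neg = "\<lambda>(f::'n \<Rightarrow> real) i. - f i"
  have neg: "?neg \<in> measurable iid_std_normal iid_std_normal"
    by (rule measurable_PiM_single') (auto simp: space_PiM)
  have "distr std_gauss_vec borel uminus = distr iid_std_normal borel (uminus \<circ> ?vec)"
    unfolding std_gauss_vec_def by (rule distr_distr[OF _ measurable_vec_lambda_iid_std_normal]) simp
  also have "uminus \<circ> ?vec = ?vec \<circ> ?neg" by (auto simp: vec_eq_iff)
  also have "distr iid_std_normal borel \<dots> = distr (distr iid_std_normal iid_std_normal ?neg) borel ?vec"
    by (rule distr_distr[OF measurable_vec_lambda_iid_std_normal neg, symmetric])
  finally show ?thesis unfolding iid_std_normal_reflect std_gauss_vec_def .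
qed

lemma integral_std_gauss_vec_reflect:
  fixes F :: "real^'n::finite \<Rightarrow> real"
  assumes "F \<in> borel_measurable borel"
  shows "(\<integral>z. F (- z) \<partial>std_gauss_vec) = (\<integral>z. F z \<partial>std_gauss_vec)"
proof -
  have "uminus \<in> measurable (std_gauss_vec :: (real^'n) measure) borel"
    by (subst measurable_cong_sets[OF sets_std_gauss_vec refl]) simp
  from integral_distr[OF this assms] show ?thesis unfolding std_gauss_vec_reflect ..
qed

lemma borel_measurable_matrix_vector_mult:
  "(\<lambda>z. (L::real^'m::finite^'n::finite) *v z) \<in> borel_measurable borel"
  by (intro borel_measurable_continuous_onI linear_continuous_on)
     (simp add: linear_conv_bounded_linear[symmetric] matrix_vector_mul_linear)

lemma std_gauss_vec_linear_second_moment: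
  fixes L :: "real^'n::finite^'n"
  shows "integrable std_gauss_vec (\<lambda>z. (L *v z)$i * (L *v z)$j)"
    and "(\<integral>z. (L *v z)$i * (L *v z)$j \<partial>std_gauss_vec) = (L ** transpose L)$i$j"
proof -
  have eq: "(L *v z)$i * (L *v z)$j = (\<Sum>k\<in>UNIV. \<Sum>m\<in>UNIV. (L$i$k * L$j$m) * (z$k * z$m))" for z
    unfolding matrix_vector_mult_def by (simp add: sum_product mult_ac)
  show "integrable std_gauss_vec (\<lambda>z. (L *v z)$i * (L *v z)$j)"
    unfolding eq by (simp add: std_gauss_vec_second_moment)
  have "(\<integral>z. (L *v z)$i * (L *v z)$j \<partial>std_gauss_vec)
      = (\<Sum>k\<in>UNIV. \<Sum>m\<in>UNIV. (L$i$k * L$j$m) * (if k = m then 1 else 0))"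
    unfolding eq by (simp add: std_gauss_vec_second_moment)
  also have "\<dots> = (L ** transpose L)$i$j"
    by (simp add: matrix_matrix_mult_def transpose_def if_distrib cong: if_cong)
  finally show "(\<integral>z. (L *v z)$i * (L *v z)$j \<partial>std_gauss_vec) = (L ** transpose L)$i$j" .
qed

text \<open>The factor chosen by \<^const>\<open>gauss_vec\<close>; it is a square root of \<open>S\<close> only if
  \<open>S\<close> has one, hence the factorisation hypotheses below.\<close>
definition gauss_factor :: "real^'n^'n \<Rightarrow> real^'n^'n" where
  "gauss_factor S = (SOME L. L ** transpose L = S)"

lemma gauss_vec_eq_distr: "gauss_vec S = distr std_gauss_vec borel (\<lambda>z. gauss_factor S *v z)"
  unfolding gauss_vec_def gauss_factor_def ..

lemma gauss_factor_factorizes: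
  "\<exists>L::real^'n^'n. L ** transpose L = S \<Longrightarrow> gauss_factor S ** transpose (gauss_factor S) = S"
  unfolding gauss_factor_def by (rule someI_ex)

lemma sets_gauss_vec[simp]: "sets (gauss_vec (S::real^'n::finite^'n)) = sets borel"
  unfolding gauss_vec_eq_distr by simp

lemma measurable_matrix_vector_mult_std_gauss_vec:
  "(\<lambda>z. (L::real^'n::finite^'n) *v z) \<in> measurable std_gauss_vec borel"
  by (subst measurable_cong_sets[OF sets_std_gauss_vec refl]) (rule borel_measurable_matrix_vector_mult)

lemma integral_gauss_vec:
  fixes F :: "real^'n::finite \<Rightarrow> real"
  assumes "F \<in> borel_measurable borel"
  shows "(\<integral>h. F h \<partial>gauss_vec S) = (\<integral>z. F (gauss_factor S *v z) \<partial>std_gauss_vec)"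
  unfolding gauss_vec_eq_distr by (rule integral_distr[OF measurable_matrix_vector_mult_std_gauss_vec assms])

lemma integrable_gauss_vec:
  fixes F :: "real^'n::finite \<Rightarrow> real"
  assumes "F \<in> borel_measurable borel"
  shows "integrable (gauss_vec S) F \<longleftrightarrow> integrable std_gauss_vec (\<lambda>z. F (gauss_factor S *v z))"
  unfolding gauss_vec_eq_distr by (rule integrable_distr_eq[OF measurable_matrix_vector_mult_std_gauss_vec assms])

lemma integral_gauss_vec_reflect:
  fixes F :: "real^'n::finite \<Rightarrow> real"
  assumes [measurable]: "F \<in> borel_measurable borel"
  shows "(\<integral>h. F (- h) \<partial>gauss_vec S) = (\<integral>h. F h \<partial>gauss_vec S)"
proof -
  let ?L = "gauss_factor S"
  have "(\<lambda>z. F (?L *v z)) \<in> borel_measurable borel"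
    using borel_measurable_matrix_vector_mult[of ?L] by measurable
  moreover have "?L *v (- z) = - (?L *v z)" for z
    by (simp add: vec_eq_iff matrix_vector_mult_def sum_negf)
  ultimately show ?thesis
    by (simp add: integral_gauss_vec integral_std_gauss_vec_reflect[symmetric])
qed

lemma gauss_vec_second_moment:
  fixes S :: "real^'n::finite^'n"
  shows "integrable (gauss_vec S) (\<lambda>h. h$i * h$j)"
    and "\<exists>L::real^'n^'n. L ** transpose L = S \<Longrightarrow> (\<integral>h. h$i * h$j \<partial>gauss_vec S) = S$i$j"
proof -
  have m: "(\<lambda>h::real^'n. h$i * h$j) \<in> borel_measurable borel" by measurable
  show "integrable (gauss_vec S) (\<lambda>h. h$i * h$j)"
    unfolding integrable_gauss_vec[OF m] by (rule std_gauss_vec_linear_second_moment)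
  show "\<exists>L::real^'n^'n. L ** transpose L = S \<Longrightarrow> (\<integral>h. h$i * h$j \<partial>gauss_vec S) = S$i$j"
    unfolding integral_gauss_vec[OF m] std_gauss_vec_linear_second_moment by (simp add: gauss_factor_factorizes)
qed

lemma gauss_vec_quadratic_form:
  fixes S M :: "real^'n::finite^'n"
  shows "integrable (gauss_vec S) (\<lambda>h. h \<bullet> (M *v h))"
    and "\<exists>L::real^'n^'n. L ** transpose L = S \<Longrightarrow>
      (\<integral>h. h \<bullet> (M *v h) \<partial>gauss_vec S) = frobenius_inner M S"
  unfolding quadratic_form_eq_frobenius_inner frobenius_inner_def
  by (simp_all add: gauss_vec_second_moment)

lemma integrable_gauss_vec_activation_product:
  fixes S :: "real^'n::finite^'n"
  assumes [measurable]: "\<sigma> \<in> borel_measurable borel" and bound: "\<And>x. \<bar>\<sigma> x\<bar> \<le> C * \<bar>x\<bar>"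
  shows "integrable (gauss_vec S) (\<lambda>h. \<sigma> (h$i) * \<sigma> (h$j))"
proof (rule Bochner_Integration.integrable_bound)
  show "integrable (gauss_vec S) (\<lambda>h. C\<^sup>2 * (h$i * h$i + h$j * h$j))"
    by (simp add: gauss_vec_second_moment)
  show "(\<lambda>h. \<sigma> (h$i) * \<sigma> (h$j)) \<in> borel_measurable (gauss_vec S)"
    unfolding gauss_vec_eq_distr by measurable
  have "norm (\<sigma> x * \<sigma> y) \<le> norm (C\<^sup>2 * (x * x + y * y))" for x y
  proof -
    have "norm (\<sigma> x * \<sigma> y) \<le> (C * \<bar>x\<bar>) * (C * \<bar>y\<bar>)"
      unfolding real_norm_def abs_mult by (intro mult_mono bound) (auto intro: order.trans[OF _ bound])
    also have "\<dots> = C\<^sup>2 * (\<bar>x\<bar> * \<bar>y\<bar>)" by (simp add: power2_eq_square mult_ac)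
    also have "\<dots> \<le> C\<^sup>2 * (x * x + y * y)"
    proof (rule mult_left_mono)
      have "2 * \<bar>x\<bar> * \<bar>y\<bar> \<le> x * x + y * y"
        using sum_squares_bound[of "\<bar>x\<bar>" "\<bar>y\<bar>"] by (simp add: power2_eq_square)
      moreover have "0 \<le> \<bar>x\<bar> * \<bar>y\<bar>" by simp
      ultimately show "\<bar>x\<bar> * \<bar>y\<bar> \<le> x * x + y * y" by linarith
    qed simp
    finally show ?thesis by simp
  qed
  then show "AE h in gauss_vec S. norm (\<sigma> (h$i) * \<sigma> (h$j)) \<le> norm (C\<^sup>2 * (h$i * h$i + h$j * h$j))"
    by simp
qed

section \<open>The covariance recursion\<close>

lemma gauss_vec_activation_quadratic_form:
  fixes S W :: "real^'n::finite^'n"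
  assumes "\<sigma> \<in> borel_measurable borel" "\<And>x. \<bar>\<sigma> x\<bar> \<le> C * \<bar>x\<bar>"
  shows "integrable (gauss_vec S) (\<lambda>h. (\<chi> i. \<sigma> (h$i)) \<bullet> (W *v (\<chi> i. \<sigma> (h$i))))"
    and "(\<integral>h. (\<chi> i. \<sigma> (h$i)) \<bullet> (W *v (\<chi> i. \<sigma> (h$i))) \<partial>gauss_vec S)
      = frobenius_inner W (G_map \<sigma> S)"
  unfolding quadratic_form_eq_frobenius_inner frobenius_inner_def G_map_def
  by (simp_all add: integrable_gauss_vec_activation_product[OF assms])

lemma G_map_symmetric: "transpose (G_map \<sigma> S) = G_map \<sigma> S"
  unfolding G_map_def transpose_def by (simp add: mult.commute)

lemma G_map_psd:
  fixes S :: "real^'n::finite^'n"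
  assumes "\<sigma> \<in> borel_measurable borel" "\<And>x. \<bar>\<sigma> x\<bar> \<le> C * \<bar>x\<bar>"
  shows "0 \<le> v \<bullet> (G_map \<sigma> S *v v)"
proof -
  let ?s = "\<lambda>h::real^'n. \<chi> i. \<sigma> (h$i)" and ?W = "\<chi> i j. v$i * v$j :: real^'n^'n"
  have "v \<bullet> (G_map \<sigma> S *v v) = frobenius_inner ?W (G_map \<sigma> S)"
    unfolding quadratic_form_eq_frobenius_inner by (rule frobenius_inner_commute)
  also have "\<dots> = (\<integral>h. ?s h \<bullet> (?W *v ?s h) \<partial>gauss_vec S)"
    by (rule gauss_vec_activation_quadratic_form(2)[OF assms, symmetric])
  finally have "v \<bullet> (G_map \<sigma> S *v v) = (\<integral>h. ?s h \<bullet> (?W *v ?s h) \<partial>gauss_vec S)" .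
  moreover have "?s h \<bullet> (?W *v ?s h) = (v \<bullet> ?s h)\<^sup>2" for h
    unfolding inner_matrix_vector_eq_sum by (simp add: inner_vec_def power2_eq_square sum_product mult_ac)
  ultimately show ?thesis by (simp add: Bochner_Integration.integral_nonneg)
qed

lemma expected_dirichlet_relu_le:
  fixes S :: "real^'n::finite^'n"
  assumes adj: "is_adjacency A"
  shows "(\<integral>h. dirichlet A (\<chi> i. relu_ab a b (h$i)) \<partial>gauss_vec S)
    \<le> (a\<^sup>2 + b\<^sup>2) / 2 * (\<integral>h. dirichlet A h \<partial>gauss_vec S)"
proof -
  let ?F = "\<lambda>h::real^'n. dirichlet A (\<chi> i. relu_ab a b (h$i))"
  let ?F' = "\<lambda>h::real^'n. dirichlet A (\<chi> i. relu_ab a b (- h$i))"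
  have int_F: "integrable (gauss_vec S) ?F"
    unfolding dirichlet_def
    by (rule gauss_vec_activation_quadratic_form(1)[OF borel_measurable_relu_ab abs_relu_ab_le])
  have "integrable (gauss_vec S) ?F'"
    unfolding dirichlet_def using abs_relu_ab_le[of a b "- _"]
    by (intro gauss_vec_activation_quadratic_form(1)[where \<sigma> = "\<lambda>x. relu_ab a b (- x)"]) auto
  moreover have "integrable (gauss_vec S) (\<lambda>h. dirichlet A h)"
    unfolding dirichlet_def by (rule gauss_vec_quadratic_form(1))
  moreover have "?F \<in> borel_measurable borel"
    using borel_measurable_integrable[OF int_F] by (simp add: measurable_cong_sets[OF sets_gauss_vec refl])
  then have "(\<integral>h. ?F' h \<partial>gauss_vec S) = (\<integral>h. ?F h \<partial>gauss_vec S)"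
    using integral_gauss_vec_reflect[of ?F S] by simp
  ultimately have "2 * (\<integral>h. ?F h \<partial>gauss_vec S) = (\<integral>h. ?F h + ?F' h \<partial>gauss_vec S)"
    using int_F by simp
  also have "\<dots> \<le> (\<integral>h. (a\<^sup>2 + b\<^sup>2) * dirichlet A h \<partial>gauss_vec S)"
    using int_F \<open>integrable (gauss_vec S) ?F'\<close> \<open>integrable (gauss_vec S) (\<lambda>h. dirichlet A h)\<close>
    by (intro integral_mono dirichlet_relu_reflect_le[OF adj]) auto
  finally show ?thesis by simp
qed

lemma Sigma_l_Suc_factorization:
  fixes A :: "real^'n::finite^'n" and X :: "real^'d::finite^'n"
  assumes "is_adjacency A" "0 \<le> sw2" "1 \<le> l"
    and "\<sigma> \<in> borel_measurable borel" "\<And>x. \<bar>\<sigma> x\<bar> \<le> C * \<bar>x\<bar>"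
  shows "\<exists>L::real^'n^'n. L ** transpose L = Sigma_l \<sigma> sw2 A X (Suc l)"
proof -
  obtain K :: "real^'n^'n" where K: "K ** transpose K = G_map \<sigma> (Sigma_l \<sigma> sw2 A X l)"
    using psd_matrix_factorization[OF G_map_symmetric G_map_psd[OF assms(4,5)]] by blast
  have "Sigma_l \<sigma> sw2 A X (Suc l) = sw2 *\<^sub>R (A_hat A ** G_map \<sigma> (Sigma_l \<sigma> sw2 A X l) ** A_hat A)"
    using assms(3) by simp
  then show ?thesis
    using scaled_sandwich_factorization[OF assms(2) A_hat_symmetric[OF assms(1)] K] by simp
qed

lemma frobenius_inner_laplacian_layer_le:
  fixes A S :: "real^'n::finite^'n"
  assumes adj: "is_adjacency A"
  shows "frobenius_inner (mat 1 - A_hat A) (A_hat A ** G_map (relu_ab a b) S ** A_hat A)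
    \<le> (lambda_gap A)\<^sup>2 * ((a\<^sup>2 + b\<^sup>2) / 2 * (\<integral>h. dirichlet A h \<partial>gauss_vec S))"
proof -
  let ?M = "A_hat A" and ?s = "\<lambda>h::real^'n. \<chi> i. relu_ab a b (h$i)"
  note relu = borel_measurable_relu_ab abs_relu_ab_le
  have "frobenius_inner (mat 1 - ?M) (?M ** G_map (relu_ab a b) S ** ?M)
      = frobenius_inner (?M ** (mat 1 - ?M) ** ?M) (G_map (relu_ab a b) S)"
    using frobenius_inner_mult[of "mat 1 - ?M" ?M _ ?M] by (simp add: A_hat_symmetric[OF adj])
  also have "\<dots> = (\<integral>h. ?s h \<bullet> ((?M ** (mat 1 - ?M) ** ?M) *v ?s h) \<partial>gauss_vec S)"
    by (rule gauss_vec_activation_quadratic_form(2)[OF relu, symmetric])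
  also have "\<dots> \<le> (\<integral>h. (lambda_gap A)\<^sup>2 * dirichlet A (?s h) \<partial>gauss_vec S)"
    unfolding dirichlet_def
    by (intro integral_mono integrable_mult_right gauss_vec_activation_quadratic_form(1)[OF relu]
        A_hat_sandwich_le_lambda_gap[OF adj, unfolded dirichlet_def])
  also have "\<dots> = (lambda_gap A)\<^sup>2 * (\<integral>h. dirichlet A (?s h) \<partial>gauss_vec S)"
    by simp
  also have "\<dots> \<le> (lambda_gap A)\<^sup>2 * ((a\<^sup>2 + b\<^sup>2) / 2 * (\<integral>h. dirichlet A h \<partial>gauss_vec S))"
    by (rule mult_left_mono[OF expected_dirichlet_relu_le[OF adj]]) simp
  finally show ?thesis .
qed

lemma expected_dirichlet_Sigma_l_Suc_le:
  fixes A :: "real^'n::finite^'n" and X :: "real^'d::finite^'n" and a b sw2 :: real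
  assumes adj: "is_adjacency A" and sw2: "0 \<le> sw2" and l: "1 \<le> l"
  shows "(\<integral>h. dirichlet A h \<partial>gauss_vec (Sigma_l (relu_ab a b) sw2 A X (Suc l)))
    \<le> (lambda_gap A)\<^sup>2 * sw2 * (a\<^sup>2 + b\<^sup>2) / 2
      * (\<integral>h. dirichlet A h \<partial>gauss_vec (Sigma_l (relu_ab a b) sw2 A X l))"
    (is "_ \<le> _ * ?E")
proof -
  let ?M = "A_hat A" and ?G = "G_map (relu_ab a b) (Sigma_l (relu_ab a b) sw2 A X l)"
  have "(\<integral>h. dirichlet A h \<partial>gauss_vec (Sigma_l (relu_ab a b) sw2 A X (Suc l)))
      = frobenius_inner (mat 1 - ?M) (sw2 *\<^sub>R (?M ** ?G ** ?M))"
    using gauss_vec_quadratic_form(2)[OF Sigma_l_Suc_factorization[OF adj sw2 l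
          borel_measurable_relu_ab abs_relu_ab_le]] l
    unfolding dirichlet_def by simp
  also have "\<dots> = sw2 * frobenius_inner (mat 1 - ?M) (?M ** ?G ** ?M)"
    by (simp add: frobenius_inner_def sum_distrib_left mult_ac)
  also have "\<dots> \<le> sw2 * ((lambda_gap A)\<^sup>2 * ((a\<^sup>2 + b\<^sup>2) / 2 * ?E))"
    by (rule mult_left_mono[OF frobenius_inner_laplacian_layer_le[OF adj] sw2])
  also have "\<dots> = (lambda_gap A)\<^sup>2 * sw2 * (a\<^sup>2 + b\<^sup>2) / 2 * ?E"
    by (simp add: field_simps)
  finally show ?thesis .
qed

lemma bigo_power_if_eventually_contracting:
  fixes f :: "nat \<Rightarrow> real"
  assumes nonneg: "\<And>l. 0 \<le> f l" and c: "0 \<le> c" and step: "\<And>l. m \<le> l \<Longrightarrow> f (Suc l) \<le> c * f l"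
  shows "f \<in> O(\<lambda>l. c ^ l)"
proof -
  have bound: "f (m + k) \<le> c ^ k * f m" for k
  proof (induction k)
    case (Suc k)
    have "f (m + Suc k) \<le> c * f (m + k)" using step[of "m + k"] by simp
    also have "\<dots> \<le> c * (c ^ k * f m)" using Suc.IH c by (rule mult_left_mono)
    finally show ?case by simp
  qed simp
  show ?thesis
  proof (cases "c = 0")
    case True
    have "f l = 0" if l: "Suc m \<le> l" for l
    proof -
      obtain k where "l = m + Suc k" using le_Suc_ex[OF l] by auto
      then show ?thesis using bound[of "Suc k"] nonneg[of l] True by simp
    qed
    then have "eventually (\<lambda>l. norm (f l) \<le> 1 * norm (c ^ l)) at_top"
      unfolding eventually_at_top_linorder by (auto intro!: exI[of _ "Suc m"])
    then show ?thesis by (rule bigoI)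
  next
    case False
    have "norm (f l) \<le> f m / c ^ m * norm (c ^ l)" if "m \<le> l" for l
    proof -
      have "f l \<le> c ^ (l - m) * f m" using bound[of "l - m"] that by simp
      also have "\<dots> = f m / c ^ m * c ^ l"
        using False c that by (simp add: power_diff field_simps)
      finally show ?thesis using nonneg[of l] c by simp
    qed
    then have "eventually (\<lambda>l. norm (f l) \<le> f m / c ^ m * norm (c ^ l)) at_top"
      unfolding eventually_at_top_linorder by blast
    then show ?thesis by (rule bigoI)
  qed
qed

theorem mainTheorem14:
  fixes A :: "real^'n::finite^'n" and X :: "real^'d::finite^'n"
    and \<alpha> \<beta> sw2 :: real
  assumes "is_adjacency A"
    and "\<alpha> \<ge> 0" and "\<beta> \<ge> 0" and "\<not> (\<alpha> = 0 \<and> \<beta> = 0)"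
    and "sw2 > 0"
    and "(lambda_gap A)\<^sup>2 * sw2 * (\<alpha>\<^sup>2 + \<beta>\<^sup>2) < 2"
  shows "(\<lambda>l. \<integral>h. dirichlet A h \<partial>gauss_vec (Sigma_l (relu_ab \<alpha> \<beta>) sw2 A X l))
           \<in> O(\<lambda>l. ((lambda_gap A)\<^sup>2 * sw2 * (\<alpha>\<^sup>2 + \<beta>\<^sup>2) / 2) ^ l)"
proof (rule bigo_power_if_eventually_contracting)
  show "0 \<le> \<integral>h. dirichlet A h \<partial>gauss_vec (Sigma_l (relu_ab \<alpha> \<beta>) sw2 A X l)" for l
    using dirichlet_nonneg[OF assms(1)] by (simp add: Bochner_Integration.integral_nonneg)
  show "0 \<le> (lambda_gap A)\<^sup>2 * sw2 * (\<alpha>\<^sup>2 + \<beta>\<^sup>2) / 2"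
    using assms(5) by simp
  show "(\<integral>h. dirichlet A h \<partial>gauss_vec (Sigma_l (relu_ab \<alpha> \<beta>) sw2 A X (Suc l)))
      \<le> (lambda_gap A)\<^sup>2 * sw2 * (\<alpha>\<^sup>2 + \<beta>\<^sup>2) / 2
        * (\<integral>h. dirichlet A h \<partial>gauss_vec (Sigma_l (relu_ab \<alpha> \<beta>) sw2 A X l))" if "1 \<le> l" for l
    by (rule expected_dirichlet_Sigma_l_Suc_le[OF assms(1) less_imp_le[OF assms(5)] that])
qed

end
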